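(* Let $0\le q\in L_1^{loc}(\mathbb{R})$ and assume there is $a\in(0,\infty)$ with $\inf_{x\in\mathbb{R}}\int_{x-a}^{x+a}q(t)\,dt>0$. Suppose there exist $\alpha\ge1$, $\beta>0$, $X>0$ such that for all $|x|\ge X$, $\frac1\alpha\le\frac{d(t)}{d(x)}\le\alpha$ whenever $|t-x|\le\beta$. Then for each $s\in(0,\infty)$ there is $c(s)\in(0,\infty)$ such that $$J_s(x):=\int_x^\infty\exp\Big(-s\int_x^t q(\xi)\,d\xi\Big)dt\le c(s)\,d(x),\quad x\in\mathbb{R}.$$
   Context: $d(x)=\inf\{d>0:\int_{x-d}^{x+d}q(t)\,dt=2\}$ for $x\in\mathbb{R}$. *)

theory Defs
  imports "HOL-Analysis.Analysis"
begin

definition dfun :: "(real \<Rightarrow> real) \<Rightarrow> real \<Rightarrow> real" where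
  "dfun q x = Inf {d. d > 0 \<and> (LINT t:{x-d..x+d}|lborel. q t) = 2}"

end

theory Submission
  imports Defs "HOL-Probability.Distributions"
begin

(*
  Every window of length 2a carries q-mass at least m > 0, so the mass of [x, t] grows at least
  like m (t - x) / (2a) - m.  This bounds J_s uniformly; as the primitive of q is uniformly
  continuous on compacts, d is bounded below on [-X, X], which settles |x| < X.

  For |x| >= X the ratio condition gives d(z) <= alpha d(x) whenever |z - x| <= beta, so every
  window of length r = 4 alpha d(x) inside [x, x + beta] has mass at least 2.  The mass of [x, t]
  therefore grows at rate 2/r up to x + beta and at rate m/(2a) beyond, and J_s(x) is dominated by
  two exponential integrals: the first is O(r), and the second carries the factor
  exp(-2 s beta / r) <= r / (2 s beta), so it is O(r) as well.
*)

(* J_s(x) of the paper, written with the Henstock-Kurzweil integral; for locally integrable q it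
   agrees with the Lebesgue integral of the statement. *)
definition Jfun :: "(real \<Rightarrow> real) \<Rightarrow> real \<Rightarrow> real \<Rightarrow> ennreal" where
  "Jfun q s x = (\<integral>\<^sup>+ t\<in>{x..}. ennreal (exp (- s * integral {x..t} q)) \<partial>lborel)"

lemma integral_ge_mult_window:
  fixes q :: "real \<Rightarrow> real"
  assumes int: "\<And>a b. q integrable_on {a..b}" and w: "w > 0"
    and window: "\<And>y. x0 \<le> y \<Longrightarrow> y + w \<le> x0 + U \<Longrightarrow> \<mu> \<le> integral {y..y+w} q"
  shows "real k * w \<le> U \<Longrightarrow> real k * \<mu> \<le> integral {x0..x0 + real k * w} q"
proof (induction k)
  case 0
  then show ?case by simp
next
  case (Suc k)
  have "real k * w \<le> U" using Suc.prems w by (simp add: algebra_simps)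
  moreover have "integral {x0..x0 + real k * w} q + integral {x0 + real k * w..x0 + real k * w + w} q
        = integral {x0..x0 + real k * w + w} q"
    using w by (intro Henstock_Kurzweil_Integration.integral_combine int) auto
  moreover have "\<mu> \<le> integral {x0 + real k * w..x0 + real k * w + w} q"
    using w Suc.prems by (intro window) (auto simp: algebra_simps)
  ultimately show ?case using Suc.IH by (simp add: algebra_simps)
qed

lemma integral_ge_by_windows:
  fixes q :: "real \<Rightarrow> real"
  assumes int: "\<And>a b. q integrable_on {a..b}" and nonneg: "\<And>t. 0 \<le> q t"
    and w: "w > 0" and \<mu>: "\<mu> \<ge> 0"
    and window: "\<And>y. x0 \<le> y \<Longrightarrow> y + w \<le> x0 + U \<Longrightarrow> \<mu> \<le> integral {y..y+w} q"
    and u: "0 \<le> u" "u \<le> U"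
  shows "\<mu> * (u / w - 1) \<le> integral {x0..x0 + u} q"
proof -
  define k where "k = nat \<lfloor>u / w\<rfloor>"
  have "real k \<le> u / w" unfolding k_def using u w by simp
  then have kw: "real k * w \<le> u" using w by (simp add: field_simps)
  have "u / w - 1 \<le> real k" unfolding k_def by linarith
  with \<mu> have "\<mu> * (u / w - 1) \<le> real k * \<mu>" by (simp add: mult_left_mono mult.commute)
  also have "\<dots> \<le> integral {x0..x0 + real k * w} q"
    using kw u by (intro integral_ge_mult_window[OF int w window]) auto
  also have "\<dots> \<le> integral {x0..x0 + u} q"
    using kw int nonneg by (intro integral_subset_le) auto
  finally show ?thesis .
qed

lemma integral_ge_by_uniform_windows:
  fixes q :: "real \<Rightarrow> real"
  assumes int: "\<And>a b. q integrable_on {a..b}" and nonneg: "\<And>t. 0 \<le> q t"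
    and w: "w > 0" and \<mu>: "\<mu> \<ge> 0" and window: "\<And>y. \<mu> \<le> integral {y..y+w} q"
    and u: "0 \<le> u"
  shows "\<mu> * (u / w - 1) \<le> integral {x0..x0 + u} q"
  using u by (intro integral_ge_by_windows[OF int nonneg w \<mu> window, where U = u]) auto

lemma exists_symmetric_integral_eq:
  fixes q :: "real \<Rightarrow> real"
  assumes int: "\<And>a b. q integrable_on {a..b}" and nonneg: "\<And>t. 0 \<le> q t"
    and w: "w > 0" and m: "m > 0" and window: "\<And>y. m \<le> integral {y..y+w} q"
    and c: "c > 0"
  shows "\<exists>h>0. integral {x-h..x+h} q = c"
proof -
  define H where "H = w * (c / m + 1) / 2"
  have H: "H > 0" unfolding H_def using w m c by (simp add: add_pos_pos)
  have "c = m * (2 * H / w - 1)" unfolding H_def using w m by (simp add: field_simps)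
  also have "\<dots> \<le> integral {x-H..x-H + 2 * H} q"
    using H m by (intro integral_ge_by_uniform_windows[OF int nonneg w _ window]) auto
  also have "x-H + 2 * H = x + H" by simp
  finally have big: "c \<le> integral {x-H..x+H} q" .
  define I where "I t = integral {x-H..t} q" for t
  have I_diff: "integral {x-h..x+h} q = I (x+h) - I (x-h)" if "0 \<le> h" "h \<le> H" for h
    using Henstock_Kurzweil_Integration.integral_combine[OF _ _ int, of "x-H" "x-h" "x+h"] that unfolding I_def by simp
  have "continuous_on {x-H..x+H} I" unfolding I_def by (rule indefinite_integral_continuous_1[OF int])
  then have "continuous_on {0..H} (\<lambda>h. I (x+h) - I (x-h))"
    by (intro continuous_on_diff; rule continuous_on_compose2) (auto intro!: continuous_intros)
  moreover have "I (x+0) - I (x-0) \<le> c" "c \<le> I (x+H) - I (x-H)"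
    using c big I_diff[of 0] I_diff[of H] H by auto
  ultimately obtain h where h: "0 \<le> h" "h \<le> H" "I (x+h) - I (x-h) = c"
    using IVT'[of "\<lambda>h. I (x+h) - I (x-h)" 0 c H] H by auto
  then have "h \<noteq> 0" using c by auto
  with h show ?thesis using I_diff by (intro exI[of _ h]) auto
qed

lemma symmetric_integral_small:
  fixes q :: "real \<Rightarrow> real"
  assumes int: "\<And>a b. q integrable_on {a..b}" and \<epsilon>: "\<epsilon> > 0"
  shows "\<exists>\<delta>>0. \<forall>x h. \<bar>x\<bar> \<le> R \<longrightarrow> 0 \<le> h \<longrightarrow> h \<le> \<delta> \<longrightarrow> integral {x-h..x+h} q < \<epsilon>"
proof -
  define I where "I t = integral {-R-1..t} q" for t
  have "continuous_on {-R-1..R+1} I" unfolding I_def by (rule indefinite_integral_continuous_1[OF int])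
  then have "uniformly_continuous_on {-R-1..R+1} I" by (rule compact_uniformly_continuous) simp
  then obtain d where d: "d > 0"
    and I_close: "\<forall>t\<in>{-R-1..R+1}. \<forall>t'\<in>{-R-1..R+1}. dist t' t < d \<longrightarrow> dist (I t') (I t) < \<epsilon>"
    using \<epsilon> unfolding uniformly_continuous_on_def by blast
  show ?thesis
  proof (intro exI[of _ "min 1 (d/3)"] conjI allI impI)
    fix x h assume x: "\<bar>x\<bar> \<le> R" and h: "0 \<le> h" "h \<le> min 1 (d/3)"
    have "integral {-R-1..x-h} q + integral {x-h..x+h} q = integral {-R-1..x+h} q"
      using x h by (intro Henstock_Kurzweil_Integration.integral_combine int) auto
    moreover have "dist (I (x+h)) (I (x-h)) < \<epsilon>"
      by (intro I_close[rule_format]) (use x h d in \<open>auto simp: dist_real_def\<close>)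
    ultimately show "integral {x-h..x+h} q < \<epsilon>" unfolding I_def by (simp add: dist_real_def)
  qed (use d in simp)
qed

lemma dfun_eq_Inf_integral:
  fixes q :: "real \<Rightarrow> real"
  assumes locint: "\<And>a b. set_integrable lborel {a..b} q"
  shows "dfun q x = Inf {d. d > 0 \<and> integral {x-d..x+d} q = 2}"
  unfolding dfun_def using set_borel_integral_eq_integral(2)[OF locint] by simp

lemma le_dfun:
  fixes q :: "real \<Rightarrow> real"
  assumes locint: "\<And>a b. set_integrable lborel {a..b} q"
    and ex: "\<exists>h>0. integral {x-h..x+h} q = 2"
    and small: "\<And>h. 0 < h \<Longrightarrow> h \<le> \<delta> \<Longrightarrow> integral {x-h..x+h} q \<noteq> 2"
  shows "\<delta> \<le> dfun q x"
  unfolding dfun_eq_Inf_integral[OF locint]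
proof (rule cInf_greatest)
  show "{d. 0 < d \<and> integral {x-d..x+d} q = 2} \<noteq> {}" using ex by auto
  fix h assume "h \<in> {d. 0 < d \<and> integral {x-d..x+d} q = 2}"
  then show "\<delta> \<le> h" using small[of h] by force
qed

lemma two_le_integral_if_dfun_less:
  fixes q :: "real \<Rightarrow> real"
  assumes locint: "\<And>a b. set_integrable lborel {a..b} q" and nonneg: "\<And>t. 0 \<le> q t"
    and ex: "\<exists>h>0. integral {x-h..x+h} q = 2" and h: "dfun q x < h"
  shows "2 \<le> integral {x-h..x+h} q"
proof -
  let ?S = "{d. 0 < d \<and> integral {x-d..x+d} q = 2}"
  have "?S \<noteq> {}" using ex by auto
  then obtain h' where "h' \<in> ?S" "h' < h"
    using cInf_lessD[of ?S h] h unfolding dfun_eq_Inf_integral[OF locint] by blast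
  moreover have "integral {x-h'..x+h'} q \<le> integral {x-h..x+h} q" if "h' < h"
    using that nonneg set_borel_integral_eq_integral(1)[OF locint] by (intro integral_subset_le) auto
  ultimately show ?thesis by auto
qed

lemma dfun_uniformly_positive:
  fixes q :: "real \<Rightarrow> real"
  assumes locint: "\<And>a b. set_integrable lborel {a..b} q"
    and ex: "\<And>x. \<exists>h>0. integral {x-h..x+h} q = 2"
  shows "\<exists>\<delta>>0. \<forall>x. \<bar>x\<bar> \<le> R \<longrightarrow> \<delta> \<le> dfun q x"
proof -
  obtain \<delta> where "\<delta> > 0"
    and small: "\<forall>x h. \<bar>x\<bar> \<le> R \<longrightarrow> 0 \<le> h \<longrightarrow> h \<le> \<delta> \<longrightarrow> integral {x-h..x+h} q < 2"
    using symmetric_integral_small[OF set_borel_integral_eq_integral(1)[OF locint], of 2 R] by auto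
  show ?thesis
  proof (intro exI[of _ \<delta>] conjI allI impI)
    fix x assume x: "\<bar>x\<bar> \<le> R"
    have "integral {x-h..x+h} q \<noteq> 2" if "0 < h" "h \<le> \<delta>" for h
      using small[rule_format, OF x, of h] that by simp
    then show "\<delta> \<le> dfun q x" by (rule le_dfun[OF locint ex])
  qed fact
qed

lemma nn_integral_exp_decay:
  fixes x l A :: real
  assumes l: "l > 0" and A: "A \<ge> 0"
  shows "(\<integral>\<^sup>+t\<in>{x..}. ennreal (A * exp (- l * (t - x))) \<partial>lborel) = ennreal (A / l)"
proof -
  have "(\<integral>\<^sup>+t\<in>{x..}. ennreal (A * exp (- l * (t - x))) \<partial>lborel)
     = \<bar>1/l\<bar> * (\<integral>\<^sup>+u. ennreal (A * exp (- l * ((x + (1/l) * u) - x))) * indicator {x..} (x + (1/l) * u) \<partial>lborel)"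
    using l by (intro nn_integral_real_affine) auto
  also have "(\<lambda>u. ennreal (A * exp (- l * ((x + (1/l) * u) - x))) * indicator {x..} (x + (1/l) * u))
      = (\<lambda>u. ennreal A * (ennreal (u^0 * exp (- u)) * indicator {0..} u))"
    using l A by (auto simp: fun_eq_iff ennreal_mult zero_le_divide_iff split: split_indicator)
  also have "(\<integral>\<^sup>+u. ennreal A * (ennreal (u^0 * exp (- u)) * indicator {0..} u) \<partial>lborel) = ennreal A"
    using nn_intergal_power_times_exp_Ici[of 0] by (subst nn_integral_cmult) auto
  finally show ?thesis using l A by (simp add: ennreal_mult[symmetric] divide_simps mult.commute)
qed

lemma nn_integral_le_exp_decay:
  fixes f :: "real \<Rightarrow> real"
  assumes l: "l > 0" and A: "A \<ge> 0"
    and f: "\<And>t. x \<le> t \<Longrightarrow> f t \<le> A * exp (- l * (t - x))"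
  shows "(\<integral>\<^sup>+t\<in>{x..}. ennreal (f t) \<partial>lborel) \<le> ennreal (A / l)"
proof -
  have "(\<integral>\<^sup>+t\<in>{x..}. ennreal (f t) \<partial>lborel) \<le> (\<integral>\<^sup>+t\<in>{x..}. ennreal (A * exp (- l * (t - x))) \<partial>lborel)"
  proof (rule nn_integral_mono)
    fix t
    show "ennreal (f t) * indicator {x..} t \<le> ennreal (A * exp (- l * (t - x))) * indicator {x..} t"
      using f[of t] by (cases "x \<le> t") (simp_all add: ennreal_leI)
  qed
  then show ?thesis using nn_integral_exp_decay[OF l A] by simp
qed

lemma nn_integral_le_two_exp_decay:
  fixes f :: "real \<Rightarrow> real"
  assumes l1: "l1 > 0" and A1: "A1 \<ge> 0" and l2: "l2 > 0" and A2: "A2 \<ge> 0"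
    and f: "\<And>t. x \<le> t \<Longrightarrow> f t \<le> A1 * exp (- l1 * (t - x)) + A2 * exp (- l2 * (t - x))"
  shows "(\<integral>\<^sup>+t\<in>{x..}. ennreal (f t) \<partial>lborel) \<le> ennreal (A1 / l1 + A2 / l2)"
proof -
  let ?g = "\<lambda>A l t. ennreal (A * exp (- l * (t - x))) * indicator {x..} t"
  have "(\<integral>\<^sup>+t\<in>{x..}. ennreal (f t) \<partial>lborel) \<le> (\<integral>\<^sup>+t. ?g A1 l1 t + ?g A2 l2 t \<partial>lborel)"
  proof (rule nn_integral_mono)
    fix t
    have "ennreal (f t) \<le> ennreal (A1 * exp (- l1 * (t - x))) + ennreal (A2 * exp (- l2 * (t - x)))"
      if "x \<le> t"
      using ennreal_leI[OF f[OF that]] A1 A2 by simp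
    then show "ennreal (f t) * indicator {x..} t \<le> ?g A1 l1 t + ?g A2 l2 t"
      by (cases "x \<le> t") (simp_all add: distrib_right[symmetric])
  qed
  also have "\<dots> = (\<integral>\<^sup>+t. ?g A1 l1 t \<partial>lborel) + (\<integral>\<^sup>+t. ?g A2 l2 t \<partial>lborel)"
    by (intro nn_integral_add) auto
  also have "\<dots> = ennreal (A1 / l1 + A2 / l2)"
    using nn_integral_exp_decay[OF l1 A1, of x] nn_integral_exp_decay[OF l2 A2, of x] A1 A2 l1 l2
    by simp
  finally show ?thesis .
qed

lemma Jfun_le_of_windows:
  fixes q :: "real \<Rightarrow> real"
  assumes int: "\<And>a b. q integrable_on {a..b}" and nonneg: "\<And>t. 0 \<le> q t"
    and s: "s > 0" and w: "w > 0" and m: "m > 0" and window: "\<And>y. m \<le> integral {y..y+w} q"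
  shows "Jfun q s x \<le> ennreal (exp (s * m) * w / (s * m))"
proof -
  have "exp (- s * integral {x..t} q) \<le> exp (s * m) * exp (- (s * m / w) * (t - x))" if "x \<le> t" for t
  proof -
    have "m * ((t - x) / w - 1) \<le> integral {x..x + (t - x)} q"
      using that m by (intro integral_ge_by_uniform_windows[OF int nonneg w _ window]) auto
    then have "s * (m * ((t - x) / w - 1)) \<le> s * integral {x..t} q"
      using s by (intro mult_left_mono) auto
    then have "- s * integral {x..t} q \<le> s * m + - (s * m / w) * (t - x)"
      by (simp add: algebra_simps diff_divide_distrib)
    then show ?thesis by (simp add: exp_add[symmetric])
  qed
  then have "Jfun q s x \<le> ennreal (exp (s * m) / (s * m / w))"
    unfolding Jfun_def using s w m by (intro nn_integral_le_exp_decay) auto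
  then show ?thesis by simp
qed

lemma integral_ge_two_rates:
  fixes q :: "real \<Rightarrow> real"
  assumes int: "\<And>a b. q integrable_on {a..b}" and nonneg: "\<And>t. 0 \<le> q t"
    and w: "w > 0" and m: "m > 0" and window: "\<And>y. m \<le> integral {y..y+w} q"
    and \<beta>: "\<beta> > 0" and r: "r > 0" and \<mu>: "\<mu> > 0"
    and local_window: "\<And>y. x \<le> y \<Longrightarrow> y + r \<le> x + \<beta> \<Longrightarrow> \<mu> \<le> integral {y..y+r} q"
  shows "\<And>t. x \<le> t \<Longrightarrow> t \<le> x + \<beta> \<Longrightarrow> \<mu> * ((t - x) / r - 1) \<le> integral {x..t} q"
    and "\<And>t. x + \<beta> \<le> t \<Longrightarrow> \<mu> * (\<beta> / r - 1) + m * ((t - x - \<beta>) / w - 1) \<le> integral {x..t} q"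
proof -
  show mass_near: "\<mu> * ((t - x) / r - 1) \<le> integral {x..t} q" if "x \<le> t" "t \<le> x + \<beta>" for t
  proof -
    have "\<mu> * ((t - x) / r - 1) \<le> integral {x..x + (t - x)} q"
      using that \<mu> by (intro integral_ge_by_windows[OF int nonneg r _ local_window]) auto
    then show ?thesis by simp
  qed
  show "\<mu> * (\<beta> / r - 1) + m * ((t - x - \<beta>) / w - 1) \<le> integral {x..t} q"
    if "x + \<beta> \<le> t" for t
  proof -
    have "integral {x..x + \<beta>} q + integral {x + \<beta>..t} q = integral {x..t} q"
      using that \<beta> by (intro Henstock_Kurzweil_Integration.integral_combine int) auto
    moreover have "m * ((t - x - \<beta>) / w - 1) \<le> integral {x + \<beta>..x + \<beta> + (t - x - \<beta>)} q"
      using that m by (intro integral_ge_by_uniform_windows[OF int nonneg w _ window]) auto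
    ultimately show ?thesis using mass_near[of "x + \<beta>"] \<beta> by simp
  qed
qed

lemma exp_neg_integral_le_two_exp_decay:
  fixes q :: "real \<Rightarrow> real"
  assumes int: "\<And>a b. q integrable_on {a..b}" and nonneg: "\<And>t. 0 \<le> q t"
    and s: "s > 0" and w: "w > 0" and m: "m > 0" and window: "\<And>y. m \<le> integral {y..y+w} q"
    and \<beta>: "\<beta> > 0" and r: "r > 0" and \<mu>: "\<mu> > 0"
    and local_window: "\<And>y. x \<le> y \<Longrightarrow> y + r \<le> x + \<beta> \<Longrightarrow> \<mu> \<le> integral {y..y+r} q"
    and t: "x \<le> t"
  shows "exp (- s * integral {x..t} q)
    \<le> exp (s * \<mu>) * exp (- (s * \<mu> / r) * (t - x))
      + exp (s * (\<mu> + m + m * \<beta> / w)) * exp (- (s * \<mu> * \<beta> / r)) * exp (- (s * m / w) * (t - x))"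
    (is "_ \<le> ?near + ?far")
proof (cases "t \<le> x + \<beta>")
  case True
  have "s * (\<mu> * ((t - x) / r - 1)) \<le> s * integral {x..t} q"
    using local_window t True s
    by (intro mult_left_mono integral_ge_two_rates(1)[OF int nonneg w m window \<beta> r \<mu>]) auto
  then have "exp (- s * integral {x..t} q) \<le> ?near"
    by (simp add: exp_add[symmetric] algebra_simps diff_divide_distrib)
  moreover have "0 \<le> ?far" by simp
  ultimately show ?thesis by linarith
next
  case False
  have "s * (\<mu> * (\<beta> / r - 1) + m * ((t - x - \<beta>) / w - 1)) \<le> s * integral {x..t} q"
    using local_window False s
    by (intro mult_left_mono integral_ge_two_rates(2)[OF int nonneg w m window \<beta> r \<mu>]) auto
  then have "exp (- s * integral {x..t} q) \<le> ?far"
    by (simp add: exp_add[symmetric] algebra_simps diff_divide_distrib add_divide_distrib)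
  moreover have "0 \<le> ?near" by simp
  ultimately show ?thesis by linarith
qed

lemma Jfun_le_of_local_windows:
  fixes q :: "real \<Rightarrow> real"
  assumes int: "\<And>a b. q integrable_on {a..b}" and nonneg: "\<And>t. 0 \<le> q t"
    and s: "s > 0" and w: "w > 0" and m: "m > 0" and window: "\<And>y. m \<le> integral {y..y+w} q"
    and \<beta>: "\<beta> > 0" and r: "r > 0" and \<mu>: "\<mu> > 0"
    and local_window: "\<And>y. x \<le> y \<Longrightarrow> y + r \<le> x + \<beta> \<Longrightarrow> \<mu> \<le> integral {y..y+r} q"
  shows "Jfun q s x
    \<le> ennreal (r * (exp (s * \<mu>) / (s * \<mu>) + exp (s * (\<mu> + m + m * \<beta> / w)) * w / (s\<^sup>2 * \<mu> * m * \<beta>)))"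
proof -
  define K where "K = exp (s * (\<mu> + m + m * \<beta> / w))"
  define A2 where "A2 = K * exp (- (s * \<mu> * \<beta> / r))"
  have "exp (- s * integral {x..t} q)
      \<le> exp (s * \<mu>) * exp (- (s * \<mu> / r) * (t - x)) + A2 * exp (- (s * m / w) * (t - x))"
    if "x \<le> t" for t
    unfolding A2_def K_def
    by (rule exp_neg_integral_le_two_exp_decay[OF int nonneg s w m window \<beta> r \<mu> local_window that])
  then have "Jfun q s x \<le> ennreal (exp (s * \<mu>) / (s * \<mu> / r) + A2 / (s * m / w))"
    unfolding Jfun_def using s w m r \<mu> by (intro nn_integral_le_two_exp_decay) (auto simp: A2_def K_def)
  also have "\<dots> \<le> ennreal (r * (exp (s * \<mu>) / (s * \<mu>) + K * w / (s\<^sup>2 * \<mu> * m * \<beta>)))"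
  proof (rule ennreal_leI)
    have "s * \<mu> * \<beta> / r \<le> exp (s * \<mu> * \<beta> / r)"
      using exp_ge_add_one_self[of "s * \<mu> * \<beta> / r"] by linarith
    then have "exp (- (s * \<mu> * \<beta> / r)) \<le> r / (s * \<mu> * \<beta>)"
      using s \<mu> \<beta> r by (simp add: exp_minus field_simps)
    then have "A2 \<le> K * (r / (s * \<mu> * \<beta>))"
      unfolding A2_def K_def by (intro mult_left_mono) auto
    then have "A2 * (w / (s * m)) \<le> K * (r / (s * \<mu> * \<beta>)) * (w / (s * m))"
      using s m w by (intro mult_right_mono) auto
    also have "\<dots> = r * (K * w / (s\<^sup>2 * \<mu> * m * \<beta>))"
      by (simp add: field_simps power2_eq_square)
    finally show "exp (s * \<mu>) / (s * \<mu> / r) + A2 / (s * m / w)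
        \<le> r * (exp (s * \<mu>) / (s * \<mu>) + K * w / (s\<^sup>2 * \<mu> * m * \<beta>))"
      by (simp add: distrib_left ac_simps)
  qed
  finally show ?thesis unfolding K_def .
qed

lemma two_le_window_integral_near:
  fixes q :: "real \<Rightarrow> real"
  assumes locint: "\<And>a b. set_integrable lborel {a..b} q" and nonneg: "\<And>t. 0 \<le> q t"
    and ex: "\<And>z. \<exists>h>0. integral {z-h..z+h} q = 2"
    and ratio: "\<And>z. \<bar>z - x\<bar> \<le> \<beta> \<Longrightarrow> dfun q z \<le> \<alpha> * dfun q x"
    and r: "0 < r" "2 * (\<alpha> * dfun q x) < r" and y: "x \<le> y" "y + r \<le> x + \<beta>"
  shows "2 \<le> integral {y..y+r} q"
proof -
  have "dfun q (y + r/2) < r/2" using ratio[of "y + r/2"] r y by fastforce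
  then have "2 \<le> integral {(y + r/2) - r/2..(y + r/2) + r/2} q"
    by (rule two_le_integral_if_dfun_less[OF locint nonneg ex])
  then show ?thesis by (simp add: add.commute)
qed

lemma Jfun_le_const_mult_dfun:
  fixes q :: "real \<Rightarrow> real"
  assumes locint: "\<And>a b. set_integrable lborel {a..b} q" and nonneg: "\<And>t. 0 \<le> q t"
    and s: "s > 0" and w: "w > 0" and m: "m > 0" and window: "\<And>y. m \<le> integral {y..y+w} q"
    and \<alpha>: "\<alpha> > 0" and \<beta>: "\<beta> > 0"
    and ratio: "\<And>x t. X \<le> \<bar>x\<bar> \<Longrightarrow> \<bar>t - x\<bar> \<le> \<beta> \<Longrightarrow> dfun q t / dfun q x \<le> \<alpha>"
  shows "\<exists>c>0. \<forall>x. Jfun q s x \<le> ennreal (c * dfun q x)"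
proof -
  have int: "\<And>a b. q integrable_on {a..b}"
    using set_borel_integral_eq_integral(1)[OF locint] .
  have ex: "\<And>x. \<exists>h>0. integral {x-h..x+h} q = 2"
    by (intro exists_symmetric_integral_eq[OF int nonneg w m window]) simp
  have d_pos: "dfun q x > 0" for x
    using dfun_uniformly_positive[OF locint ex, of "\<bar>x\<bar>"] by force
  obtain \<delta> where \<delta>: "\<delta> > 0" "\<And>x. \<bar>x\<bar> \<le> X \<Longrightarrow> \<delta> \<le> dfun q x"
    using dfun_uniformly_positive[OF locint ex, of X] by blast
  define C0 where "C0 = exp (s * m) * w / (s * m)"
  define C1 where "C1 = exp (s * 2) / (s * 2) + exp (s * (2 + m + m * \<beta> / w)) * w / (s\<^sup>2 * 2 * m * \<beta>)"
  have C0: "C0 > 0" and C1: "C1 > 0" unfolding C0_def C1_def using s w m \<beta> by (auto intro!: add_pos_pos)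
  have "Jfun q s x \<le> ennreal ((C0 / \<delta> + 4 * \<alpha> * C1) * dfun q x)" for x
  proof (cases "\<bar>x\<bar> < X")
    case True
    have "Jfun q s x \<le> ennreal C0"
      unfolding C0_def by (rule Jfun_le_of_windows[OF int nonneg s w m window])
    also have "C0 \<le> C0 / \<delta> * dfun q x"
      using \<delta> True C0 by (simp add: field_simps)
    also have "\<dots> \<le> (C0 / \<delta> + 4 * \<alpha> * C1) * dfun q x"
      using C1 \<alpha> d_pos[of x] by (intro mult_right_mono) auto
    finally show ?thesis by (simp add: ennreal_leI)
  next
    case False
    define r where "r = 4 * \<alpha> * dfun q x"
    have r: "0 < r" "2 * (\<alpha> * dfun q x) < r" unfolding r_def using \<alpha> d_pos[of x] by auto
    have near: "dfun q z \<le> \<alpha> * dfun q x" if "\<bar>z - x\<bar> \<le> \<beta>" for z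
      using ratio[of x z] False that d_pos[of x] by (simp add: pos_divide_le_eq mult.commute)
    have "Jfun q s x \<le> ennreal (r * C1)"
      unfolding C1_def
      by (intro Jfun_le_of_local_windows[OF int nonneg s w m window \<beta> r(1) _
            two_le_window_integral_near[OF locint nonneg ex near r]]) auto
    also have "r * C1 \<le> (C0 / \<delta> + 4 * \<alpha> * C1) * dfun q x"
      unfolding r_def using C0 \<delta> d_pos[of x] by (simp add: algebra_simps)
    finally show ?thesis by (simp add: ennreal_leI)
  qed
  moreover have "C0 / \<delta> + 4 * \<alpha> * C1 > 0"
    using C0 C1 \<delta>(1) \<alpha> by (intro add_pos_pos divide_pos_pos mult_pos_pos) auto
  ultimately show ?thesis by blast
qed

lemma INF_symmetric_integral_le:
  fixes q :: "real \<Rightarrow> real"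
  assumes int: "\<And>a b. q integrable_on {a..b}" and nonneg: "\<And>t. 0 \<le> q t"
  shows "(INF x. integral {x-a..x+a} q) \<le> integral {y..y + 2*a} q"
proof -
  have "bdd_below (range (\<lambda>x. integral {x-a..x+a} q))"
    using int nonneg by (intro bdd_belowI[of _ 0]) (auto intro: integral_nonneg)
  then have "(INF x. integral {x-a..x+a} q) \<le> integral {(y+a)-a..(y+a)+a} q"
    by (rule cINF_lower) simp
  then show ?thesis by (simp add: algebra_simps)
qed

theorem lemma4p4:
  fixes q :: "real \<Rightarrow> real"
  assumes nonneg: "\<And>t. 0 \<le> q t"
    and locint: "\<And>a b. set_integrable lborel {a..b} q"
    and inf_pos: "\<exists>a>0. (INF x. LINT t:{x-a..x+a}|lborel. q t) > 0"
    and ratio: "\<exists>\<alpha>\<ge>1. \<exists>\<beta>>0. \<exists>X>0. \<forall>x t. \<bar>x\<bar> \<ge> X \<and> \<bar>t - x\<bar> \<le> \<beta> \<longrightarrow>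
                  1/\<alpha> \<le> dfun q t / dfun q x \<and> dfun q t / dfun q x \<le> \<alpha>"
  shows "\<forall>s>0. \<exists>c>0. \<forall>x.
           (\<integral>\<^sup>+ t\<in>{x..}. ennreal (exp (- s * (LINT \<xi>:{x..t}|lborel. q \<xi>))) \<partial>lborel)
             \<le> ennreal (c * dfun q x)"
proof (intro allI impI)
  fix s :: real assume s: "s > 0"
  have int: "\<And>a b. q integrable_on {a..b}"
    and LINT_eq: "\<And>a b. (LINT t:{a..b}|lborel. q t) = integral {a..b} q"
    using set_borel_integral_eq_integral[OF locint] by auto
  obtain a where a: "a > 0" and m: "(INF x. integral {x-a..x+a} q) > 0"
    using inf_pos by (auto simp: LINT_eq)
  obtain \<alpha> \<beta> X where \<alpha>: "\<alpha> \<ge> 1" and \<beta>: "\<beta> > 0"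
    and ratio_le: "\<And>x t. X \<le> \<bar>x\<bar> \<Longrightarrow> \<bar>t - x\<bar> \<le> \<beta> \<Longrightarrow> dfun q t / dfun q x \<le> \<alpha>"
    using ratio by blast
  have "\<exists>c>0. \<forall>x. Jfun q s x \<le> ennreal (c * dfun q x)"
    using a \<alpha> by (intro Jfun_le_const_mult_dfun[OF locint nonneg s _ m
        INF_symmetric_integral_le[OF int nonneg] _ \<beta> ratio_le]) auto
  then show "\<exists>c>0. \<forall>x. (\<integral>\<^sup>+ t\<in>{x..}. ennreal (exp (- s * (LINT \<xi>:{x..t}|lborel. q \<xi>))) \<partial>lborel)
      \<le> ennreal (c * dfun q x)"
    unfolding LINT_eq Jfun_def .
qed

end
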